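(* Let $n,d,D$ be positive integers with $D\ge d$, let $\varepsilon>0$, and let $\psi,\phi:\mathbb{R}^d\to\mathbb{R}^D$ be fixed maps. Let $K$ be an $n\times d$ matrix with rows $K_1,\dots,K_n$. Then there is a subset $U\subseteq[n]$, determined by $K$ (and $\phi,\varepsilon$) alone, with $|U|\le D/\varepsilon$, such that for every $n\times d$ matrix $Q$ with rows $Q_1,\dots,Q_n$ and every $i\in[n]$ with $\sum_{\ell=1}^n\langle\psi(Q_i),\phi(K_\ell)\rangle^2>0$, we have $\{j\in[n]: A_{ij}\ge\varepsilon\}\subseteq U$, where $A_{ij}=\frac{\langle\psi(Q_i),\phi(K_j)\rangle^2}{\sum_{\ell=1}^n\langle\psi(Q_i),\phi(K_\ell)\rangle^2}$.
   Context: $[n]=\{1,\dots,n\}$; $\langle\cdot,\cdot\rangle$ is the standard inner product on $\mathbb{R}^D$. *)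

theory Defs
  imports "HOL-Analysis.Analysis"
begin

text \<open>Attention-type weights: rows of the n x d matrices Q, K are given as functions
  from the index set {1..n} to real^'d.\<close>
definition attn_weight ::
  "nat \<Rightarrow> (real^'d \<Rightarrow> real^'D) \<Rightarrow> (real^'d \<Rightarrow> real^'D) \<Rightarrow>
   (nat \<Rightarrow> real^'d) \<Rightarrow> (nat \<Rightarrow> real^'d) \<Rightarrow> nat \<Rightarrow> nat \<Rightarrow> real" where
  "attn_weight n \<psi> \<phi> Q K i j =
     (\<psi> (Q i) \<bullet> \<phi> (K j))^2 / (\<Sum>l=1..n. (\<psi> (Q i) \<bullet> \<phi> (K l))^2)"

end

theory Submission
  imports Defs
begin

text \<open>For fixed \<open>K\<close> and \<open>\<phi>\<close>, the score vectors \<open>(\<langle>y, \<phi>(K\<^sub>l)\<rangle>)\<^sub>l\<close>,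
  \<open>y \<in> \<real>\<^sup>D\<close>, lie in a subspace \<open>V \<subseteq> \<real>\<^sup>n\<close> spanned by \<open>D\<close> vectors. Take an
  orthonormal basis \<open>h\<^sub>1, \<dots>, h\<^sub>r\<close> of \<open>V\<close> (\<open>r \<le> D\<close>) and the leverage
  \<open>\<tau>\<^sub>j = \<Sum>\<^sub>k h\<^sub>k(j)\<^sup>2\<close>. Cauchy--Schwarz on the coordinates of \<open>f \<in> V\<close> gives
  \<open>f\<^sub>j\<^sup>2 \<le> \<parallel>f\<parallel>\<^sup>2 \<tau>\<^sub>j\<close>, so an attention weight \<open>\<ge> \<epsilon>\<close> at \<open>j\<close> forces \<open>\<tau>\<^sub>j \<ge> \<epsilon>\<close>;
  and since \<open>\<Sum>\<^sub>j \<tau>\<^sub>j = r \<le> D\<close>, at most \<open>D/\<epsilon>\<close> coordinates have \<open>\<tau>\<^sub>j \<ge> \<epsilon>\<close>.\<close>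

text \<open>Vectors indexed by a finite set \<open>I\<close> are functions, and only their values on \<open>I\<close>
  matter; orthonormal families are lists, so coefficients are indexed by position.\<close>

definition inner_on :: "'i set \<Rightarrow> ('i \<Rightarrow> real) \<Rightarrow> ('i \<Rightarrow> real) \<Rightarrow> real" where
  "inner_on I f g = (\<Sum>l\<in>I. f l * g l)"

definition orthonormal_on :: "'i set \<Rightarrow> ('i \<Rightarrow> real) list \<Rightarrow> bool" where
  "orthonormal_on I hs \<longleftrightarrow>
     (\<forall>a<length hs. \<forall>b<length hs. inner_on I (hs!a) (hs!b) = (if a = b then 1 else 0))"

definition lincomb :: "('i \<Rightarrow> real) list \<Rightarrow> (nat \<Rightarrow> real) \<Rightarrow> 'i \<Rightarrow> real" where
  "lincomb hs c l = (\<Sum>k<length hs. c k * (hs!k) l)"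

definition span_on :: "'i set \<Rightarrow> ('i \<Rightarrow> real) list \<Rightarrow> ('i \<Rightarrow> real) set" where
  "span_on I hs = {f. \<exists>c. \<forall>l\<in>I. f l = lincomb hs c l}"

definition leverage :: "('i \<Rightarrow> real) list \<Rightarrow> 'i \<Rightarrow> real" where
  "leverage hs j = (\<Sum>k<length hs. ((hs!k) j)\<^sup>2)"

lemma inner_on_commute: "inner_on I f g = inner_on I g f"
  unfolding inner_on_def by (simp add: mult.commute)

lemma inner_on_self_nonneg: "inner_on I f f \<ge> 0"
  unfolding inner_on_def by (intro sum_nonneg) simp

lemma inner_on_self_eq_0_iff:
  assumes "finite I"
  shows "inner_on I f f = 0 \<longleftrightarrow> (\<forall>l\<in>I. f l = 0)"
  using assms unfolding inner_on_def by (simp add: sum_nonneg_eq_0_iff)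

lemma inner_on_lincomb_right:
  "inner_on I f (lincomb hs c) = (\<Sum>k<length hs. c k * inner_on I f (hs!k))"
  unfolding inner_on_def lincomb_def
  by (simp add: sum_distrib_left sum_distrib_right mult_ac sum.swap[of _ I])

lemma inner_on_lincomb_orthonormal:
  assumes "orthonormal_on I hs" "m < length hs"
  shows "inner_on I (hs!m) (lincomb hs c) = c m"
proof -
  have "inner_on I (hs!m) (lincomb hs c) = (\<Sum>k<length hs. if k = m then c k else 0)"
    using assms unfolding inner_on_lincomb_right orthonormal_on_def by (intro sum.cong) auto
  then show ?thesis
    using assms(2) by simp
qed

lemma lincomb_snoc: "lincomb (hs @ [h]) c l = lincomb hs c l + c (length hs) * h l"
  unfolding lincomb_def by (simp add: nth_append)

lemma span_on_snoc: "span_on I hs \<subseteq> span_on I (hs @ [h])"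
proof
  fix f assume "f \<in> span_on I hs"
  then obtain c where c: "\<forall>l\<in>I. f l = lincomb hs c l"
    unfolding span_on_def by blast
  define c' where "c' k = (if k < length hs then c k else 0)" for k
  have "lincomb hs c' = lincomb hs c"
    unfolding lincomb_def c'_def by (intro ext sum.cong) auto
  then have "\<forall>l\<in>I. f l = lincomb (hs @ [h]) c' l"
    using c by (simp add: lincomb_snoc c'_def)
  then show "f \<in> span_on I (hs @ [h])"
    unfolding span_on_def by blast
qed

lemma orthonormal_on_snoc:
  assumes "orthonormal_on I hs" "inner_on I h h = 1"
    and "\<And>m. m < length hs \<Longrightarrow> inner_on I (hs!m) h = 0"
  shows "orthonormal_on I (hs @ [h])"
  unfolding orthonormal_on_def
proof (intro allI impI)
  fix a b assume "a < length (hs @ [h])" "b < length (hs @ [h])"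
  then consider "a < length hs" "b < length hs" | "a < length hs" "b = length hs"
    | "a = length hs" "b < length hs" | "a = length hs" "b = length hs"
    by fastforce
  then show "inner_on I ((hs @ [h]) ! a) ((hs @ [h]) ! b) = (if a = b then 1 else 0)"
  proof cases
    case 1
    then show ?thesis using assms(1) by (simp add: nth_append orthonormal_on_def)
  next
    case 2
    then show ?thesis using assms(3)[of a] by (simp add: nth_append)
  next
    case 3
    then show ?thesis using assms(3)[of b] by (simp add: nth_append inner_on_commute)
  next
    case 4
    then show ?thesis using assms(2) by simp
  qed
qed

text \<open>One Gram--Schmidt step: subtract from \<open>g\<close> its projection onto \<open>hs\<close> and
  append the normalised residual, unless it vanishes on \<open>I\<close>.\<close>

lemma orthonormal_on_extend:
  assumes "finite I" and hs: "orthonormal_on I hs"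
  obtains hs' where "length hs' \<le> Suc (length hs)" "orthonormal_on I hs'"
    "span_on I hs \<subseteq> span_on I hs'" "g \<in> span_on I hs'"
proof -
  define c where "c k = inner_on I (hs!k) g" for k
  define r where "r l = g l - lincomb hs c l" for l
  have r_orth: "inner_on I (hs!m) r = 0" if "m < length hs" for m
  proof -
    have "inner_on I (hs!m) r = c m - inner_on I (hs!m) (lincomb hs c)"
      unfolding r_def c_def inner_on_def by (simp add: sum_subtractf right_diff_distrib)
    then show ?thesis
      using inner_on_lincomb_orthonormal[OF hs that] by simp
  qed
  show thesis
  proof (cases "inner_on I r r = 0")
    case True
    then have "\<forall>l\<in>I. g l = lincomb hs c l"
      using \<open>finite I\<close> by (simp add: inner_on_self_eq_0_iff r_def)
    then have "g \<in> span_on I hs"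
      unfolding span_on_def by blast
    then show thesis
      using that[of hs] hs by simp
  next
    case False
    define s where "s = sqrt (inner_on I r r)"
    have "s > 0"
      using False inner_on_self_nonneg[of I r] by (simp add: s_def)
    define h where "h l = r l / s" for l
    have "inner_on I h h = inner_on I r r / s\<^sup>2"
      unfolding h_def inner_on_def by (simp add: sum_divide_distrib power2_eq_square)
    then have "inner_on I h h = 1"
      using False inner_on_self_nonneg[of I r] by (simp add: s_def)
    moreover have "inner_on I (hs!m) h = 0" if "m < length hs" for m
      using r_orth[OF that] unfolding h_def inner_on_def by (simp add: sum_divide_distrib[symmetric])
    ultimately have "orthonormal_on I (hs @ [h])"
      using orthonormal_on_snoc[OF hs] by blast
    moreover have "\<forall>l\<in>I. g l = lincomb (hs @ [h]) (c(length hs := s)) l"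
    proof -
      have "lincomb hs (c(length hs := s)) = lincomb hs c"
        unfolding lincomb_def by (intro ext sum.cong) auto
      then show ?thesis
        using \<open>s > 0\<close> by (simp add: lincomb_snoc h_def r_def)
    qed
    ultimately show thesis
      using that[of "hs @ [h]"] span_on_snoc[of I hs h] unfolding span_on_def by auto
  qed
qed

lemma Gram_Schmidt_on:
  assumes "finite I" "finite G"
  obtains hs where "length hs \<le> card G" "orthonormal_on I hs" "G \<subseteq> span_on I hs"
  using assms(2)
proof (induction G arbitrary: thesis rule: finite_induct)
  case empty
  show ?case
    by (rule empty.prems[of "[]"]) (auto simp: orthonormal_on_def)
next
  case (insert g G)
  obtain hs where "length hs \<le> card G" "orthonormal_on I hs" "G \<subseteq> span_on I hs"
    using insert.IH by blast
  moreover obtain hs' where "length hs' \<le> Suc (length hs)" "orthonormal_on I hs'"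
    "span_on I hs \<subseteq> span_on I hs'" "g \<in> span_on I hs'"
    using orthonormal_on_extend[OF assms(1) \<open>orthonormal_on I hs\<close>] by blast
  ultimately show ?case
    using insert.prems[of hs'] insert.hyps by auto
qed

lemma span_on_sum:
  assumes "finite B" "\<And>b. b \<in> B \<Longrightarrow> g b \<in> span_on I hs"
  shows "(\<lambda>l. \<Sum>b\<in>B. w b * g b l) \<in> span_on I hs"
  using assms
proof (induction B rule: finite_induct)
  case empty
  have "\<forall>l\<in>I. (\<Sum>b\<in>{}. w b * g b l) = lincomb hs (\<lambda>_. 0) l"
    by (simp add: lincomb_def)
  then show ?case
    unfolding span_on_def by blast
next
  case (insert a B)
  obtain c where c: "\<forall>l\<in>I. (\<Sum>b\<in>B. w b * g b l) = lincomb hs c l"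
    using insert unfolding span_on_def by auto
  obtain d where d: "\<forall>l\<in>I. g a l = lincomb hs d l"
    using insert.prems unfolding span_on_def by blast
  have "\<forall>l\<in>I. (\<Sum>b\<in>insert a B. w b * g b l) = lincomb hs (\<lambda>k. w a * d k + c k) l"
    using c d insert.hyps
    by (simp add: lincomb_def algebra_simps sum.distrib sum_distrib_left)
  then show ?case
    unfolding span_on_def by blast
qed

text \<open>Cauchy--Schwarz on the coefficients, whose squares sum to \<open>inner_on I f f\<close>.\<close>

lemma square_le_inner_on_leverage:
  assumes "orthonormal_on I hs" "f \<in> span_on I hs" "j \<in> I"
  shows "(f j)\<^sup>2 \<le> inner_on I f f * leverage hs j"
proof -
  obtain c where c: "\<forall>l\<in>I. f l = lincomb hs c l"
    using assms(2) unfolding span_on_def by blast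
  have "inner_on I f f = inner_on I (lincomb hs c) (lincomb hs c)"
    using c unfolding inner_on_def by (intro sum.cong) auto
  also have "\<dots> = (\<Sum>k<length hs. (c k)\<^sup>2)"
    unfolding inner_on_lincomb_right
    by (intro sum.cong) (auto simp: inner_on_commute inner_on_lincomb_orthonormal[OF assms(1)]
        power2_eq_square)
  finally have ff: "inner_on I f f = (\<Sum>k<length hs. (c k)\<^sup>2)" .
  have "(f j)\<^sup>2 = (\<Sum>k<length hs. c k * (hs!k) j)\<^sup>2"
    using c assms(3) by (simp add: lincomb_def)
  also have "\<dots> \<le> (\<Sum>k<length hs. (c k)\<^sup>2) * leverage hs j"
    unfolding leverage_def by (rule Cauchy_Schwarz_ineq_sum)
  finally show ?thesis
    using ff by simp
qed

lemma sum_leverage: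
  assumes "orthonormal_on I hs"
  shows "(\<Sum>j\<in>I. leverage hs j) = length hs"
proof -
  have "(\<Sum>j\<in>I. leverage hs j) = (\<Sum>k<length hs. inner_on I (hs!k) (hs!k))"
    unfolding leverage_def inner_on_def by (subst sum.swap) (simp add: power2_eq_square)
  also have "\<dots> = (\<Sum>k<length hs. 1)"
    using assms unfolding orthonormal_on_def by (intro sum.cong) auto
  finally show ?thesis
    by simp
qed

lemma card_large_leverage_le:
  assumes "finite I" "orthonormal_on I hs" "\<epsilon> > 0"
  shows "real (card {j\<in>I. leverage hs j \<ge> \<epsilon>}) \<le> length hs / \<epsilon>"
proof -
  let ?U = "{j\<in>I. leverage hs j \<ge> \<epsilon>}"
  have "real (card ?U) * \<epsilon> = (\<Sum>j\<in>?U. \<epsilon>)"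
    by simp
  also have "\<dots> \<le> (\<Sum>j\<in>?U. leverage hs j)"
    by (intro sum_mono) auto
  also have "\<dots> \<le> (\<Sum>j\<in>I. leverage hs j)"
    using assms(1) by (intro sum_mono2) (auto simp: leverage_def intro: sum_nonneg)
  also have "\<dots> = length hs"
    using sum_leverage[OF assms(2)] .
  finally show ?thesis
    using assms(3) by (simp add: field_simps)
qed

lemma heavy_coordinates_bound:
  fixes g :: "'b \<Rightarrow> 'i \<Rightarrow> real"
  assumes "finite I" "finite B" "\<epsilon> > 0"
  obtains U where "U \<subseteq> I" "real (card U) \<le> card B / \<epsilon>"
    "\<And>f w j. (\<And>l. l \<in> I \<Longrightarrow> f l = (\<Sum>b\<in>B. w b * g b l)) \<Longrightarrow> j \<in> I \<Longrightarrow>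
       inner_on I f f > 0 \<Longrightarrow> \<epsilon> * inner_on I f f \<le> (f j)\<^sup>2 \<Longrightarrow> j \<in> U"
proof -
  obtain hs where len: "length hs \<le> card (g ` B)" and hs: "orthonormal_on I hs"
    and span: "g ` B \<subseteq> span_on I hs"
    using Gram_Schmidt_on[OF assms(1) finite_imageI[OF assms(2)]] .
  define U where "U = {j\<in>I. leverage hs j \<ge> \<epsilon>}"
  have "length hs \<le> card B"
    using len card_image_le[OF assms(2), of g] by linarith
  have "real (card U) \<le> length hs / \<epsilon>"
    unfolding U_def by (rule card_large_leverage_le[OF assms(1) hs assms(3)])
  also have "\<dots> \<le> card B / \<epsilon>"
    using \<open>length hs \<le> card B\<close> assms(3) by (simp add: divide_right_mono)
  finally have "real (card U) \<le> card B / \<epsilon>" .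
  moreover have "j \<in> U"
    if f: "\<And>l. l \<in> I \<Longrightarrow> f l = (\<Sum>b\<in>B. w b * g b l)" and "j \<in> I"
      and pos: "inner_on I f f > 0" and heavy: "\<epsilon> * inner_on I f f \<le> (f j)\<^sup>2"
    for f w j
  proof -
    have "(\<lambda>l. \<Sum>b\<in>B. w b * g b l) \<in> span_on I hs"
      using span_on_sum[OF assms(2), of g] span by blast
    then have "f \<in> span_on I hs"
      using f unfolding span_on_def by simp
    then have "(f j)\<^sup>2 \<le> inner_on I f f * leverage hs j"
      by (rule square_le_inner_on_leverage[OF hs _ \<open>j \<in> I\<close>])
    with heavy have "inner_on I f f * \<epsilon> \<le> inner_on I f f * leverage hs j"
      by (metis mult.commute order_trans)
    then show ?thesis
      using pos \<open>j \<in> I\<close> by (simp add: U_def)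
  qed
  moreover have "U \<subseteq> I"
    by (simp add: U_def)
  ultimately show thesis
    using that by blast
qed

theorem theorem2:
  fixes n :: nat and \<epsilon> :: real
    and \<phi> :: "real^'d \<Rightarrow> real^'D"
    and K :: "nat \<Rightarrow> real^'d"
  assumes "n \<ge> 1" and "CARD('D) \<ge> CARD('d)" and "\<epsilon> > 0"
  shows "\<exists>U. U \<subseteq> {1..n} \<and> real (card U) \<le> real CARD('D) / \<epsilon> \<and>
           (\<forall>(\<psi> :: real^'d \<Rightarrow> real^'D) (Q :: nat \<Rightarrow> real^'d) i.
              i \<in> {1..n} \<and> (\<Sum>l=1..n. (\<psi> (Q i) \<bullet> \<phi> (K l))^2) > 0 \<longrightarrow>
              {j \<in> {1..n}. attn_weight n \<psi> \<phi> Q K i j \<ge> \<epsilon>} \<subseteq> U)"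
proof -
  obtain U where "U \<subseteq> {1..n}" and card_U: "real (card U) \<le> card (Basis :: (real^'D) set) / \<epsilon>"
    and heavy: "\<And>f w j. (\<And>l. l \<in> {1..n} \<Longrightarrow> f l = (\<Sum>b\<in>Basis. w b * (\<phi> (K l) \<bullet> b))) \<Longrightarrow>
      j \<in> {1..n} \<Longrightarrow> inner_on {1..n} f f > 0 \<Longrightarrow> \<epsilon> * inner_on {1..n} f f \<le> (f j)\<^sup>2 \<Longrightarrow> j \<in> U"
    by (rule heavy_coordinates_bound[where I = "{1..n}" and g = "\<lambda>b l. \<phi> (K l) \<bullet> b",
          OF finite_atLeastAtMost finite_Basis assms(3)]) blast
  have "\<forall>(\<psi> :: real^'d \<Rightarrow> real^'D) (Q :: nat \<Rightarrow> real^'d) i.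
          i \<in> {1..n} \<and> (\<Sum>l=1..n. (\<psi> (Q i) \<bullet> \<phi> (K l))^2) > 0 \<longrightarrow>
          {j \<in> {1..n}. attn_weight n \<psi> \<phi> Q K i j \<ge> \<epsilon>} \<subseteq> U"
  proof (intro allI impI subsetI)
    fix \<psi> :: "real^'d \<Rightarrow> real^'D" and Q :: "nat \<Rightarrow> real^'d" and i j
    assume "i \<in> {1..n} \<and> (\<Sum>l=1..n. (\<psi> (Q i) \<bullet> \<phi> (K l))^2) > 0"
      and j: "j \<in> {j \<in> {1..n}. attn_weight n \<psi> \<phi> Q K i j \<ge> \<epsilon>}"
    let ?f = "\<lambda>l. \<psi> (Q i) \<bullet> \<phi> (K l)"
    have norm: "inner_on {1..n} ?f ?f = (\<Sum>l=1..n. (\<psi> (Q i) \<bullet> \<phi> (K l))^2)"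
      by (simp add: inner_on_def power2_eq_square)
    then have pos: "inner_on {1..n} ?f ?f > 0"
      using \<open>i \<in> {1..n} \<and> _\<close> by simp
    then have "\<epsilon> * inner_on {1..n} ?f ?f \<le> (?f j)\<^sup>2"
      using j unfolding norm attn_weight_def by (simp add: field_simps)
    moreover have "?f l = (\<Sum>b\<in>Basis. (\<psi> (Q i) \<bullet> b) * (\<phi> (K l) \<bullet> b))" for l
      by (rule euclidean_inner)
    ultimately show "j \<in> U"
      using heavy[of ?f "\<lambda>b. \<psi> (Q i) \<bullet> b" j] j pos by simp
  qed
  moreover have "real (card U) \<le> real CARD('D) / \<epsilon>"
    using card_U by simp
  ultimately show ?thesis
    using \<open>U \<subseteq> {1..n}\<close> by blast
qed

end
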